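(* Let $\Delta$ be a simplicial complex of subsets of $\{1,\dots,n\}$ and let $f=X_\alpha X_\beta-X_\gamma X_\delta\in Q_\Delta$ be a binomial such that $X_\alpha$ and $X_\gamma$ are both entries of the same margin $\mathscr J\in\Delta$ (i.e. $\{j:\alpha_j\neq\bullet\}=\{j:\gamma_j\ne\bullet\}=\mathscr J$), and let $\mathcal K=\{j:\beta_j\ne\bullet\}$ be the margin of which $X_\beta$ is an entry. Then $L_{\mathscr J\cap\mathcal K}\cdot\tau_\Delta(f)\subseteq I_\Delta$.
   Context: $\mathbb K$ is a field, $a_1,\dots,a_n$ positive integers, $R=\mathbb K[x_{i_1,\dots,i_n}:1\le i_j\le a_j]$, $A=(x_{i_1,\dots,i_n})$ the generic table. For a tuple $\sigma$ with $\sigma_j\in\{1,\dots,a_j\}\cup\{+\}$, $x_\sigma$ is the sum of all $x_{i_1,\dots,i_n}$ with $i_j=\sigma_j$ whenever $\sigma_j\ne+$. For $\mathscr J=\{j_1<\dots<j_m\}\subseteq\{1,\dots,n\}$, the margin $A_{\mathscr J}$ is the $a_{j_1}\times\dots\times a_{j_m}$ table whose $(i_1,\dots,i_m)$ entry is $x_\sigma$ with $\sigma_{j_r}=i_r$ and $\sigma_j=+$ for $j\notin\mathscr J$; $L_{\mathscr J}\subseteq R$ is the ideal generated by the entries of $A_{\mathscr J}$ (so $L_\emptyset=(x_{+,\dots,+})$). For a table $B$ with entries in $R$, $I(B)$ is the ideal generated by all generalized $2\times2$ minors of $B$ (determinants $\det\begin{pmatrix} b_{i} & b_{j_1,\dots,i_l,\dots,j_m}\\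 b_{i_1,\dots,j_l,\dots,i_m} & b_{j}\end{pmatrix}$ interchanging one coordinate $l$), and $I_\Delta=\sum_{\mathscr J\in\Delta}I(A_{\mathscr J})$. A simplicial complex is a nonempty family of subsets of $\{1,\dots,n\}$ closed under subsets. $S_\Delta$ is the polynomial ring over $\mathbb K$ in variables $X_\sigma$ for tuples $\sigma$ with $\sigma_j\in\{1,\dots,a_j\}\cup\{\bullet\}$ and $\{j:\sigma_j\ne\bullet\}\in\Delta$; $X_\sigma$ is said to be an entry of the margin $\{j:\sigma_j\ne\bullet\}$. $\tau_\Delta:S_\Delta\to R$ sends $X_\sigma\mapsto x_{\sigma''}$ ($\bullet$ replaced by $+$). $\eta_\Delta:S_\Delta\to\mathbb K[y_{j,i}:1\le j\le n,\ i\in\{1,\dots,a_j\}\cup\{\bullet\}]$ (the $y_{j,\bullet}$ being independent variables) sends $X_\sigma\mapsto\prod_{j}y_{j,\sigma_j}$, and $Q_\Delta=\ker\eta_\Delta$. *)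

theory Defs
  imports Main "HOL-Library.Poly_Mapping"
begin

type_synonym ('v,'k) mpoly = "('v \<Rightarrow>\<^sub>0 nat) \<Rightarrow>\<^sub>0 'k"

definition pvar :: "'v \<Rightarrow> ('v,'k::comm_ring_1) mpoly" where
  "pvar v = Poly_Mapping.single (Poly_Mapping.single v 1) 1"

definition poly_ring :: "'v set \<Rightarrow> ('v,'k::comm_ring_1) mpoly set" where
  "poly_ring V = {p. \<forall>m\<in>Poly_Mapping.keys p. Poly_Mapping.keys m \<subseteq> V}"

definition peval :: "('v \<Rightarrow> ('w,'k::comm_ring_1) mpoly) \<Rightarrow> ('v,'k) mpoly \<Rightarrow> ('w,'k) mpoly" where
  "peval g p = (\<Sum>m\<in>Poly_Mapping.keys p. Poly_Mapping.single 0 (Poly_Mapping.lookup p m) * (\<Prod>v\<in>Poly_Mapping.keys m. g v ^ Poly_Mapping.lookup m v))"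

definition gen_ideal :: "'v set \<Rightarrow> ('v,'k::comm_ring_1) mpoly set \<Rightarrow> ('v,'k) mpoly set" where
  "gen_ideal V G = {x. \<exists>F c. finite F \<and> F \<subseteq> G \<and> (\<forall>s\<in>F. c s \<in> poly_ring V)
                          \<and> x = (\<Sum>s\<in>F. c s * s)}"

text \<open>Conventions: coordinates are indexed by j \<in> {0..<n} (0-based instead of 1..n);
  values of coordinate j range over {1..a j}. A tuple \<sigma> with entries in {1..a j} \<union> {+} (or \<bullet>) is a
  list of length n of type nat option, with None standing for + (resp. \<bullet>).\<close>

definition cells :: "nat \<Rightarrow> (nat \<Rightarrow> nat) \<Rightarrow> nat list set" where
  "cells n a = {c. length c = n \<and> (\<forall>j<n. 1 \<le> c!j \<and> c!j \<le> a j)}"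

definition tuples :: "nat \<Rightarrow> (nat \<Rightarrow> nat) \<Rightarrow> nat option list set" where
  "tuples n a = {\<sigma>. length \<sigma> = n \<and> (\<forall>j<n. \<forall>i. \<sigma>!j = Some i \<longrightarrow> 1 \<le> i \<and> i \<le> a j)}"

definition supp :: "nat option list \<Rightarrow> nat set" where
  "supp \<sigma> = {j. j < length \<sigma> \<and> \<sigma>!j \<noteq> None}"

definition xsum :: "nat \<Rightarrow> (nat \<Rightarrow> nat) \<Rightarrow> nat option list \<Rightarrow> (nat list,'k::comm_ring_1) mpoly" where
  "xsum n a \<sigma> = (\<Sum>c\<in>{c\<in>cells n a. \<forall>j<n. \<forall>i. \<sigma>!j = Some i \<longrightarrow> c!j = i}. pvar c)"

definition Rring :: "nat \<Rightarrow> (nat \<Rightarrow> nat) \<Rightarrow> (nat list,'k::comm_ring_1) mpoly set" where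
  "Rring n a = poly_ring (cells n a)"

definition Lideal :: "nat \<Rightarrow> (nat \<Rightarrow> nat) \<Rightarrow> nat set \<Rightarrow> (nat list,'k::comm_ring_1) mpoly set" where
  "Lideal n a J = gen_ideal (cells n a) {xsum n a \<sigma> | \<sigma>. \<sigma> \<in> tuples n a \<and> supp \<sigma> = J}"

text \<open>Generalized 2x2 minors of the margin A_J: for entries indexed by \<sigma>, \<rho> (of support J)
  and a coordinate l \<in> J, the determinant
  det [[b_\<sigma>, b_(\<rho> with l-th coord \<sigma>_l)], [b_(\<sigma> with l-th coord \<rho>_l), b_\<rho>]].\<close>
definition margin_minors :: "nat \<Rightarrow> (nat \<Rightarrow> nat) \<Rightarrow> nat set \<Rightarrow> (nat list,'k::comm_ring_1) mpoly set" where
  "margin_minors n a J = {xsum n a \<sigma> * xsum n a \<rho> - xsum n a (\<rho>[l := \<sigma>!l]) * xsum n a (\<sigma>[l := \<rho>!l])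
      | \<sigma> \<rho> l. \<sigma> \<in> tuples n a \<and> \<rho> \<in> tuples n a \<and> supp \<sigma> = J \<and> supp \<rho> = J \<and> l \<in> J}"

definition I_Delta :: "nat \<Rightarrow> (nat \<Rightarrow> nat) \<Rightarrow> nat set set \<Rightarrow> (nat list,'k::comm_ring_1) mpoly set" where
  "I_Delta n a \<Delta> = gen_ideal (cells n a) (\<Union>J\<in>\<Delta>. margin_minors n a J)"

definition simplicial_complex :: "nat \<Rightarrow> nat set set \<Rightarrow> bool" where
  "simplicial_complex n \<Delta> \<longleftrightarrow> \<Delta> \<noteq> {} \<and> (\<forall>F\<in>\<Delta>. F \<subseteq> {0..<n}) \<and> (\<forall>F\<in>\<Delta>. \<forall>G. G \<subseteq> F \<longrightarrow> G \<in> \<Delta>)"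

definition Svars :: "nat \<Rightarrow> (nat \<Rightarrow> nat) \<Rightarrow> nat set set \<Rightarrow> nat option list set" where
  "Svars n a \<Delta> = {\<sigma>\<in>tuples n a. supp \<sigma> \<in> \<Delta>}"

definition Sring :: "nat \<Rightarrow> (nat \<Rightarrow> nat) \<Rightarrow> nat set set \<Rightarrow> (nat option list,'k::comm_ring_1) mpoly set" where
  "Sring n a \<Delta> = poly_ring (Svars n a \<Delta>)"

definition tau :: "nat \<Rightarrow> (nat \<Rightarrow> nat) \<Rightarrow> (nat option list,'k::comm_ring_1) mpoly \<Rightarrow> (nat list,'k) mpoly" where
  "tau n a f = peval (xsum n a) f"

definition eta :: "nat \<Rightarrow> (nat option list,'k::comm_ring_1) mpoly \<Rightarrow> (nat \<times> nat option,'k) mpoly" where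
  "eta n f = peval (\<lambda>\<sigma>. \<Prod>j<n. pvar (j, \<sigma>!j)) f"

definition Q_Delta :: "nat \<Rightarrow> (nat \<Rightarrow> nat) \<Rightarrow> nat set set \<Rightarrow> (nat option list,'k::comm_ring_1) mpoly set" where
  "Q_Delta n a \<Delta> = {f\<in>Sring n a \<Delta>. eta n f = 0}"

end

theory Submission
  imports Defs
begin

text \<open>
  Because \<eta>(f) = 0, at every coordinate j the pair (\<gamma>_j, \<delta>_j) is either (\<alpha>_j, \<beta>_j)
  or (\<beta>_j, \<alpha>_j), and the set S of coordinates where \<alpha> and \<gamma> differ lies in
  M = J \<inter> K. Exchanging a set of coordinates between two entries of the same margin A_J is a
  telescoping sum of generalized 2x2 minors. This persists when one of the two entries belongs
  to a coarser margin M \<subseteq> J: its x-sum is the sum of the entries of A_J lying over it, and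
  exchanging coordinates in M permutes these summands.

  For an entry x_\<sigma> of A_M let A = \<alpha>|M, C = \<gamma>|M and let B be \<alpha> with its
  M-coordinates taken from \<sigma>. Three such exchanges give, modulo I_\<Delta>,
  x_\<sigma> x_\<alpha> = x_A x_B (in A_J), x_A x_\<beta> = x_C x_\<delta> (in A_K, on S) and
  x_\<sigma> x_\<gamma> = x_C x_B (in A_J), and then
  x_\<sigma> (x_\<alpha> x_\<beta> - x_\<gamma> x_\<delta>) =
    x_\<beta> (x_\<sigma> x_\<alpha> - x_A x_B) + x_B (x_A x_\<beta> - x_C x_\<delta>) - x_\<delta> (x_\<sigma> x_\<gamma> - x_C x_B).
\<close>

lemma zero_in_poly_ring: "0 \<in> poly_ring V"
  unfolding poly_ring_def by simp

lemma poly_ring_add: "p \<in> poly_ring V \<Longrightarrow> q \<in> poly_ring V \<Longrightarrow> p + q \<in> poly_ring V"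
  unfolding poly_ring_def using keys_add[of p q] by blast

lemma poly_ring_mult:
  assumes "p \<in> poly_ring V" "q \<in> poly_ring V"
  shows "p * q \<in> poly_ring V"
  unfolding poly_ring_def
proof (intro CollectI ballI)
  fix m assume "m \<in> Poly_Mapping.keys (p * q)"
  then obtain m1 m2 where "m = m1 + m2" "m1 \<in> Poly_Mapping.keys p" "m2 \<in> Poly_Mapping.keys q"
    using keys_mult[of p q] by blast
  then show "Poly_Mapping.keys m \<subseteq> V"
    using assms keys_add[of m1 m2] unfolding poly_ring_def by blast
qed

lemma poly_ring_sum: "(\<And>s. s \<in> F \<Longrightarrow> f s \<in> poly_ring V) \<Longrightarrow> sum f F \<in> poly_ring V"
  by (induction F rule: infinite_finite_induct)
    (simp_all add: zero_in_poly_ring poly_ring_add)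

lemma pvar_in_poly_ring: "v \<in> V \<Longrightarrow> pvar v \<in> poly_ring V"
  unfolding poly_ring_def pvar_def by simp

lemma gen_ideal_0: "0 \<in> gen_ideal V G"
  unfolding gen_ideal_def by (intro CollectI exI[of _ "{}"]) simp

lemma gen_ideal_generator: "g \<in> G \<Longrightarrow> g \<in> gen_ideal V G"
  unfolding gen_ideal_def
  by (intro CollectI exI[of _ "{g}"] exI[of _ "\<lambda>_. 1"]) (simp add: poly_ring_def)

lemma gen_ideal_add:
  assumes "x \<in> gen_ideal V G" "y \<in> gen_ideal V G"
  shows "x + y \<in> gen_ideal V G"
proof -
  obtain F1 c1 where F1: "finite F1" "F1 \<subseteq> G" "\<forall>s\<in>F1. c1 s \<in> poly_ring V" "x = (\<Sum>s\<in>F1. c1 s * s)"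
    using assms(1) unfolding gen_ideal_def by blast
  obtain F2 c2 where F2: "finite F2" "F2 \<subseteq> G" "\<forall>s\<in>F2. c2 s \<in> poly_ring V" "y = (\<Sum>s\<in>F2. c2 s * s)"
    using assms(2) unfolding gen_ideal_def by blast
  define c1' where "c1' s = (if s \<in> F1 then c1 s else 0)" for s
  define c2' where "c2' s = (if s \<in> F2 then c2 s else 0)" for s
  have "(\<Sum>s\<in>F1 \<union> F2. c1' s * s) = x"
    unfolding F1(4) using F1(1) F2(1)
    by (intro sum.mono_neutral_cong_right) (auto simp: c1'_def)
  moreover have "(\<Sum>s\<in>F1 \<union> F2. c2' s * s) = y"
    unfolding F2(4) using F1(1) F2(1)
    by (intro sum.mono_neutral_cong_right) (auto simp: c2'_def)
  ultimately have "x + y = (\<Sum>s\<in>F1 \<union> F2. (c1' s + c2' s) * s)"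
    by (simp add: distrib_right sum.distrib)
  moreover have "\<forall>s\<in>F1 \<union> F2. c1' s + c2' s \<in> poly_ring V"
    using F1(3) F2(3) by (simp add: c1'_def c2'_def zero_in_poly_ring poly_ring_add)
  ultimately show ?thesis
    using F1(1,2) F2(1,2) unfolding gen_ideal_def
    by (intro CollectI exI[of _ "F1 \<union> F2"] exI[of _ "\<lambda>s. c1' s + c2' s"]) simp
qed

lemma gen_ideal_mult:
  assumes "x \<in> gen_ideal V G" "p \<in> poly_ring V"
  shows "p * x \<in> gen_ideal V G"
proof -
  obtain F c where F: "finite F" "F \<subseteq> G" "\<forall>s\<in>F. c s \<in> poly_ring V" "x = (\<Sum>s\<in>F. c s * s)"
    using assms(1) unfolding gen_ideal_def by blast
  have "p * x = (\<Sum>s\<in>F. (p * c s) * s)"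
    using F(4) by (simp add: sum_distrib_left mult.assoc)
  moreover have "\<forall>s\<in>F. p * c s \<in> poly_ring V"
    using F(3) assms(2) by (auto intro: poly_ring_mult)
  ultimately show ?thesis
    using F(1,2) unfolding gen_ideal_def
    by (intro CollectI exI[of _ F] exI[of _ "\<lambda>s. p * c s"]) simp
qed

lemma gen_ideal_diff:
  assumes "x \<in> gen_ideal V G" "y \<in> gen_ideal V G"
  shows "x - y \<in> gen_ideal V G"
proof -
  have "- 1 \<in> poly_ring V"
    by (simp add: poly_ring_def)
  then show ?thesis
    using gen_ideal_add[OF assms(1) gen_ideal_mult[OF assms(2)], of "- 1"] by simp
qed

lemma gen_ideal_sum: "(\<And>s. s \<in> F \<Longrightarrow> f s \<in> gen_ideal V G) \<Longrightarrow> sum f F \<in> gen_ideal V G"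
  by (induction F rule: infinite_finite_induct) (auto intro: gen_ideal_add gen_ideal_0)

lemma gen_ideal_mult_right_from_generators:
  assumes "\<And>s. s \<in> G \<Longrightarrow> s * f \<in> gen_ideal V H" "g \<in> gen_ideal V G"
  shows "g * f \<in> gen_ideal V H"
proof -
  obtain F c where F: "F \<subseteq> G" "\<forall>s\<in>F. c s \<in> poly_ring V" "g = (\<Sum>s\<in>F. c s * s)"
    using assms(2) unfolding gen_ideal_def by blast
  have "g * f = (\<Sum>s\<in>F. c s * (s * f))"
    using F(3) by (simp add: sum_distrib_right mult.assoc)
  also have "\<dots> \<in> gen_ideal V H"
  proof (rule gen_ideal_sum)
    fix s assume "s \<in> F"
    then show "c s * (s * f) \<in> gen_ideal V H"
      using F(1,2) by (intro gen_ideal_mult[OF assms(1)]) auto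
  qed
  finally show ?thesis .
qed

lemma I_Delta_add: "f \<in> I_Delta n a \<Delta> \<Longrightarrow> g \<in> I_Delta n a \<Delta> \<Longrightarrow> f + g \<in> I_Delta n a \<Delta>"
  unfolding I_Delta_def by (rule gen_ideal_add)

lemma I_Delta_diff: "f \<in> I_Delta n a \<Delta> \<Longrightarrow> g \<in> I_Delta n a \<Delta> \<Longrightarrow> f - g \<in> I_Delta n a \<Delta>"
  unfolding I_Delta_def by (rule gen_ideal_diff)

lemma I_Delta_mult: "f \<in> I_Delta n a \<Delta> \<Longrightarrow> p \<in> Rring n a \<Longrightarrow> p * f \<in> I_Delta n a \<Delta>"
  unfolding I_Delta_def Rring_def by (rule gen_ideal_mult)

lemma I_Delta_sum: "(\<And>s. s \<in> F \<Longrightarrow> f s \<in> I_Delta n a \<Delta>) \<Longrightarrow> sum f F \<in> I_Delta n a \<Delta>"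
  unfolding I_Delta_def by (rule gen_ideal_sum)

definition list_override :: "nat set \<Rightarrow> 'a list \<Rightarrow> 'a list \<Rightarrow> 'a list" where
  "list_override S p q = map (\<lambda>j. if j \<in> S then q!j else p!j) [0..<length p]"

lemma length_list_override [simp]: "length (list_override S p q) = length p"
  by (simp add: list_override_def)

lemma nth_list_override [simp]:
  "j < length p \<Longrightarrow> list_override S p q ! j = (if j \<in> S then q!j else p!j)"
  by (simp add: list_override_def)

lemma list_override_empty [simp]: "list_override {} p q = p"
  by (rule nth_equalityI) simp_all

lemma list_override_insert:
  "l < length p \<Longrightarrow> list_override (insert l S) p q = (list_override S p q)[l := q!l]"
  by (rule nth_equalityI) (auto simp: nth_list_update)

lemma list_override_in_tuples:
  "p \<in> tuples n a \<Longrightarrow> q \<in> tuples n a \<Longrightarrow> list_override S p q \<in> tuples n a"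
  unfolding tuples_def by auto

lemma supp_list_override:
  "length q = length p \<Longrightarrow> supp (list_override S p q) = (supp p - S) \<union> (supp q \<inter> S)"
  unfolding supp_def by (auto split: if_splits)

lemma length_tuple: "\<sigma> \<in> tuples n a \<Longrightarrow> length \<sigma> = n"
  by (simp add: tuples_def)

lemma supp_tuple_subset: "\<sigma> \<in> tuples n a \<Longrightarrow> supp \<sigma> \<subseteq> {..<n}"
  by (auto simp: supp_def tuples_def)

lemma finite_tuples: "finite (tuples n a)"
proof -
  let ?N = "\<Sum>j<n. a j"
  have "set \<sigma> \<subseteq> insert None (Some ` {..?N})" if \<sigma>: "\<sigma> \<in> tuples n a" for \<sigma>
  proof
    fix x assume "x \<in> set \<sigma>"
    then obtain j where j: "j < n" "\<sigma>!j = x"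
      using \<sigma> by (auto simp: in_set_conv_nth length_tuple)
    show "x \<in> insert None (Some ` {..?N})"
    proof (cases x)
      case (Some i)
      have "i \<le> a j" using \<sigma> j Some by (auto simp: tuples_def)
      also have "a j \<le> ?N" using j by (intro member_le_sum) auto
      finally show ?thesis using Some by simp
    qed simp
  qed
  then have "tuples n a \<subseteq> {xs. set xs \<subseteq> insert None (Some ` {..?N}) \<and> length xs = n}"
    by (auto simp: length_tuple)
  then show ?thesis
    by (rule finite_subset) (simp add: finite_lists_length_eq)
qed

lemma finite_cells: "finite (cells n a)"
proof -
  have "cells n a \<subseteq> map the ` tuples n a"
  proof
    fix c assume "c \<in> cells n a"
    then have "map Some c \<in> tuples n a" "c = map the (map Some c)"
      by (auto simp: cells_def tuples_def)
    then show "c \<in> map the ` tuples n a" by blast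
  qed
  then show ?thesis
    using finite_tuples by (rule finite_subset[OF _ finite_imageI])
qed

lemma xsum_in_Rring: "xsum n a \<sigma> \<in> Rring n a"
  unfolding xsum_def Rring_def by (rule poly_ring_sum) (auto intro: pvar_in_poly_ring)

definition margin_index :: "nat set \<Rightarrow> nat list \<Rightarrow> nat option list" where
  "margin_index J c = map (\<lambda>j. if j \<in> J then Some (c!j) else None) [0..<length c]"

definition refinements :: "nat \<Rightarrow> (nat \<Rightarrow> nat) \<Rightarrow> nat set \<Rightarrow> nat option list \<Rightarrow> nat option list set" where
  "refinements n a J \<sigma> = {\<rho>\<in>tuples n a. supp \<rho> = J \<and> (\<forall>j\<in>supp \<sigma>. \<rho>!j = \<sigma>!j)}"

lemma margin_index_eq_iff:
  assumes c: "c \<in> cells n a" and \<rho>: "\<rho> \<in> tuples n a" "supp \<rho> = J"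
  shows "margin_index J c = \<rho> \<longleftrightarrow> (\<forall>j<n. \<forall>i. \<rho>!j = Some i \<longrightarrow> c!j = i)"
proof -
  have len: "length c = n" "length \<rho> = n"
    using c \<rho> by (simp_all add: cells_def length_tuple)
  have "(if j \<in> J then Some (c!j) else None) = \<rho>!j \<longleftrightarrow> (\<forall>i. \<rho>!j = Some i \<longrightarrow> c!j = i)"
    if "j < n" for j
  proof -
    have "j \<in> J \<longleftrightarrow> \<rho>!j \<noteq> None"
      using that \<rho>(2) len by (auto simp: supp_def)
    then show ?thesis
      by (cases "\<rho>!j") auto
  qed
  moreover have "margin_index J c = \<rho> \<longleftrightarrow> (\<forall>j<n. (if j \<in> J then Some (c!j) else None) = \<rho>!j)"
    using len by (simp add: margin_index_def list_eq_iff_nth_eq)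
  ultimately show ?thesis
    by simp
qed

lemma margin_index_in_refinements:
  assumes c: "c \<in> cells n a" "\<forall>j<n. \<forall>i. \<sigma>!j = Some i \<longrightarrow> c!j = i"
    and \<sigma>: "supp \<sigma> \<subseteq> J" and J: "J \<subseteq> {..<n}"
  shows "margin_index J c \<in> refinements n a J \<sigma>"
proof -
  have len: "length c = n"
    using c by (simp add: cells_def)
  have "margin_index J c \<in> tuples n a"
    using c(1) by (auto simp: margin_index_def tuples_def cells_def)
  moreover have "supp (margin_index J c) = J"
    using J len by (auto simp: margin_index_def supp_def split: if_splits)
  moreover have "margin_index J c ! j = \<sigma>!j" if j: "j \<in> supp \<sigma>" for j
  proof -
    obtain i where "\<sigma>!j = Some i" "j \<in> J" "j < n"
      using j \<sigma> J by (auto simp: supp_def)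
    then show ?thesis
      using c(2) len by (simp add: margin_index_def)
  qed
  ultimately show ?thesis
    by (simp add: refinements_def)
qed

lemma xsum_eq_sum_refinements:
  assumes \<sigma>: "\<sigma> \<in> tuples n a" "supp \<sigma> \<subseteq> J" and J: "J \<subseteq> {..<n}"
  shows "xsum n a \<sigma> = (\<Sum>\<rho>\<in>refinements n a J \<sigma>. xsum n a \<rho>)"
proof -
  define C where "C \<tau> = {c\<in>cells n a. \<forall>j<n. \<forall>i. \<tau>!j = Some i \<longrightarrow> c!j = i}" for \<tau>
  have fibre: "{c\<in>C \<sigma>. margin_index J c = \<rho>} = C \<rho>" if \<rho>: "\<rho> \<in> refinements n a J \<sigma>" for \<rho>
  proof -
    have "\<rho>!j = Some i" if "\<sigma>!j = Some i" "j < n" for i j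
      using \<rho> \<sigma>(1) that by (auto simp: refinements_def supp_def length_tuple)
    then show ?thesis
      using margin_index_eq_iff[of _ n a \<rho> J] \<rho> unfolding C_def refinements_def by blast
  qed
  have "xsum n a \<sigma> = (\<Sum>c\<in>C \<sigma>. pvar c)"
    by (simp add: xsum_def C_def)
  also have "\<dots> = (\<Sum>\<rho>\<in>refinements n a J \<sigma>. \<Sum>c\<in>{c\<in>C \<sigma>. margin_index J c = \<rho>}. pvar c)"
  proof (rule sum.group[symmetric])
    show "finite (C \<sigma>)" "finite (refinements n a J \<sigma>)"
      using finite_cells finite_tuples by (simp_all add: C_def refinements_def)
    show "margin_index J ` C \<sigma> \<subseteq> refinements n a J \<sigma>"
      using margin_index_in_refinements[OF _ _ \<sigma>(2) J] by (auto simp: C_def)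
  qed
  also have "\<dots> = (\<Sum>\<rho>\<in>refinements n a J \<sigma>. xsum n a \<rho>)"
  proof (rule sum.cong[OF refl])
    fix \<rho> assume "\<rho> \<in> refinements n a J \<sigma>"
    then show "(\<Sum>c\<in>{c\<in>C \<sigma>. margin_index J c = \<rho>}. pvar c) = xsum n a \<rho>"
      by (simp only: fibre) (simp add: xsum_def C_def)
  qed
  finally show ?thesis .
qed

lemma margin_minor_in_I_Delta:
  assumes "J \<in> \<Delta>" "\<sigma> \<in> tuples n a" "supp \<sigma> = J" "\<rho> \<in> tuples n a" "supp \<rho> = J" "l \<in> J"
  shows "xsum n a \<sigma> * xsum n a \<rho> - xsum n a (\<rho>[l := \<sigma>!l]) * xsum n a (\<sigma>[l := \<rho>!l]) \<in> I_Delta n a \<Delta>"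
  unfolding I_Delta_def margin_minors_def using assms
  by (intro gen_ideal_generator) blast

lemma margin_swap_in_I_Delta:
  assumes J: "J \<in> \<Delta>" and \<rho>: "\<rho> \<in> tuples n a" "supp \<rho> = J"
    and \<alpha>: "\<alpha> \<in> tuples n a" "supp \<alpha> = J" and S: "S \<subseteq> J"
  shows "(xsum n a \<rho> * xsum n a \<alpha> - xsum n a (list_override S \<rho> \<alpha>) * xsum n a (list_override S \<alpha> \<rho>)
    :: (nat list, 'k::comm_ring_1) mpoly) \<in> I_Delta n a \<Delta>"
proof -
  have len: "length \<rho> = n" "length \<alpha> = n"
    using \<rho> \<alpha> by (simp_all add: length_tuple)
  have "finite S"
    using S \<rho> supp_tuple_subset finite_lessThan finite_subset by metis
  then show ?thesis
    using S
  proof (induction S rule: finite_induct)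
    case empty
    show ?case by (simp add: I_Delta_def gen_ideal_0)
  next
    case (insert l S)
    define \<rho>' where "\<rho>' = list_override S \<rho> \<alpha>"
    define \<alpha>' where "\<alpha>' = list_override S \<alpha> \<rho>"
    have "l < n"
      using insert.prems \<rho> supp_tuple_subset by blast
    then have swap_l: "\<alpha>'[l := \<rho>'!l] = list_override (insert l S) \<alpha> \<rho>"
      "\<rho>'[l := \<alpha>'!l] = list_override (insert l S) \<rho> \<alpha>"
      using insert.hyps(2) len by (simp_all add: \<rho>'_def \<alpha>'_def list_override_insert)
    have "\<rho>' \<in> tuples n a" "supp \<rho>' = J" "\<alpha>' \<in> tuples n a" "supp \<alpha>' = J"
      using \<rho> \<alpha> len by (auto simp: \<rho>'_def \<alpha>'_def list_override_in_tuples supp_list_override)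
    then have minor: "(xsum n a \<rho>' * xsum n a \<alpha>' - xsum n a (\<alpha>'[l := \<rho>'!l]) * xsum n a (\<rho>'[l := \<alpha>'!l])
        :: (nat list, 'k) mpoly) \<in> I_Delta n a \<Delta>"
      using J insert.prems by (intro margin_minor_in_I_Delta) auto
    have "(xsum n a \<rho> * xsum n a \<alpha> - xsum n a \<rho>' * xsum n a \<alpha>' :: (nat list, 'k) mpoly)
        \<in> I_Delta n a \<Delta>"
      using insert by (simp add: \<rho>'_def \<alpha>'_def)
    then have "(xsum n a \<rho> * xsum n a \<alpha> - xsum n a \<rho>' * xsum n a \<alpha>')
        + (xsum n a \<rho>' * xsum n a \<alpha>' - xsum n a (\<alpha>'[l := \<rho>'!l]) * xsum n a (\<rho>'[l := \<alpha>'!l])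
        :: (nat list, 'k) mpoly) \<in> I_Delta n a \<Delta>"
      using minor by (rule I_Delta_add)
    then show ?case
      unfolding swap_l by (simp add: mult.commute)
  qed
qed

lemma bij_betw_list_override_refinements:
  assumes \<sigma>: "\<sigma> \<in> tuples n a" "supp \<sigma> \<subseteq> J" and \<alpha>: "\<alpha> \<in> tuples n a" "supp \<alpha> = J"
    and S: "S \<subseteq> supp \<sigma>"
  shows "bij_betw (\<lambda>\<rho>. list_override S \<rho> \<alpha>) (refinements n a J \<sigma>)
    (refinements n a J (list_override S \<sigma> \<alpha>))"
proof -
  define \<sigma>' where "\<sigma>' = list_override S \<sigma> \<alpha>"
  have len: "length \<sigma> = n" "length \<alpha> = n"
    using \<sigma> \<alpha> by (simp_all add: length_tuple)
  have supp_\<sigma>_n: "j < n" if "j \<in> supp \<sigma>" for j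
    using that \<sigma>(1) supp_tuple_subset by blast
  then have S_n: "j < n" if "j \<in> S" for j
    using that S by blast
  have S_J: "S \<subseteq> J"
    using S \<sigma>(2) by blast
  have R_iff: "\<rho> \<in> refinements n a J \<sigma> \<longleftrightarrow> \<rho> \<in> tuples n a \<and> supp \<rho> = J
      \<and> (\<forall>j\<in>S. \<rho>!j = \<sigma>!j) \<and> (\<forall>j\<in>supp \<sigma> - S. \<rho>!j = \<sigma>!j)" for \<rho>
    using S by (auto simp: refinements_def)
  have "supp \<sigma>' = supp \<sigma>"
    using S S_J \<alpha>(2) len by (auto simp: \<sigma>'_def supp_list_override)
  then have R'_iff: "\<rho> \<in> refinements n a J \<sigma>' \<longleftrightarrow> \<rho> \<in> tuples n a \<and> supp \<rho> = J
      \<and> (\<forall>j\<in>S. \<rho>!j = \<alpha>!j) \<and> (\<forall>j\<in>supp \<sigma> - S. \<rho>!j = \<sigma>!j)" for \<rho>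
    using S S_n len unfolding refinements_def supp_def by (auto simp: \<sigma>'_def)
  show ?thesis
    unfolding \<sigma>'_def[symmetric]
  proof (rule bij_betw_byWitness[where f' = "\<lambda>\<rho>. list_override S \<rho> \<sigma>"])
    show "\<forall>\<rho>\<in>refinements n a J \<sigma>. list_override S (list_override S \<rho> \<alpha>) \<sigma> = \<rho>"
      using S_n by (auto simp: R_iff length_tuple list_eq_iff_nth_eq)
    show "\<forall>\<rho>\<in>refinements n a J \<sigma>'. list_override S (list_override S \<rho> \<sigma>) \<alpha> = \<rho>"
      using S_n by (auto simp: R'_iff length_tuple list_eq_iff_nth_eq)
    show "(\<lambda>\<rho>. list_override S \<rho> \<alpha>) ` refinements n a J \<sigma> \<subseteq> refinements n a J \<sigma>'"
    proof (rule image_subsetI)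
      fix \<rho> assume "\<rho> \<in> refinements n a J \<sigma>"
      then show "list_override S \<rho> \<alpha> \<in> refinements n a J \<sigma>'"
        unfolding R_iff R'_iff using supp_\<sigma>_n S_n S_J \<alpha>
        by (auto simp: length_tuple list_override_in_tuples supp_list_override)
    qed
    show "(\<lambda>\<rho>. list_override S \<rho> \<sigma>) ` refinements n a J \<sigma>' \<subseteq> refinements n a J \<sigma>"
    proof (rule image_subsetI)
      fix \<rho> assume "\<rho> \<in> refinements n a J \<sigma>'"
      then show "list_override S \<rho> \<sigma> \<in> refinements n a J \<sigma>"
        unfolding R_iff R'_iff using supp_\<sigma>_n S_J S \<sigma> len
        by (auto simp: length_tuple list_override_in_tuples supp_list_override)
    qed
  qed
qed

lemma list_override_refinement:
  "\<rho> \<in> refinements n a J \<sigma> \<Longrightarrow> S \<subseteq> supp \<sigma> \<Longrightarrow> list_override S \<alpha> \<rho> = list_override S \<alpha> \<sigma>"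
  by (auto simp: refinements_def list_eq_iff_nth_eq)

lemma coarser_margin_swap_in_I_Delta:
  assumes J: "J \<in> \<Delta>" and \<sigma>: "\<sigma> \<in> tuples n a" "supp \<sigma> \<subseteq> J"
    and \<alpha>: "\<alpha> \<in> tuples n a" "supp \<alpha> = J" and S: "S \<subseteq> supp \<sigma>"
  shows "(xsum n a \<sigma> * xsum n a \<alpha> - xsum n a (list_override S \<sigma> \<alpha>) * xsum n a (list_override S \<alpha> \<sigma>)
    :: (nat list, 'k::comm_ring_1) mpoly) \<in> I_Delta n a \<Delta>"
proof -
  define \<sigma>' where "\<sigma>' = list_override S \<sigma> \<alpha>"
  define R where "R = refinements n a J \<sigma>"
  have J_n: "J \<subseteq> {..<n}"
    using \<alpha> supp_tuple_subset by blast
  have \<sigma>': "\<sigma>' \<in> tuples n a" "supp \<sigma>' \<subseteq> J"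
    using \<sigma> \<alpha> S by (auto simp: \<sigma>'_def list_override_in_tuples supp_list_override length_tuple)
  have "(xsum n a \<sigma> :: (nat list, 'k) mpoly) = (\<Sum>\<rho>\<in>R. xsum n a \<rho>)"
    "(xsum n a \<sigma>' :: (nat list, 'k) mpoly) = (\<Sum>\<rho>\<in>refinements n a J \<sigma>'. xsum n a \<rho>)"
    using \<sigma> \<sigma>' J_n by (simp_all add: R_def xsum_eq_sum_refinements)
  then have "xsum n a \<sigma> * xsum n a \<alpha> - xsum n a \<sigma>' * xsum n a (list_override S \<alpha> \<sigma>)
      = (\<Sum>\<rho>\<in>R. xsum n a \<rho> * xsum n a \<alpha>
                 - xsum n a (list_override S \<rho> \<alpha>) * (xsum n a (list_override S \<alpha> \<rho>) :: (nat list, 'k) mpoly))"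
    using list_override_refinement[OF _ S] bij_betw_list_override_refinements[OF \<sigma> \<alpha> S]
    by (simp add: R_def \<sigma>'_def sum_distrib_right sum_subtractf sum.reindex_bij_betw[symmetric])
  also have "\<dots> \<in> I_Delta n a \<Delta>"
    using S \<sigma>(2) by (intro I_Delta_sum margin_swap_in_I_Delta[OF J _ _ \<alpha>]) (auto simp: R_def refinements_def)
  finally show ?thesis
    by (simp add: \<sigma>'_def)
qed

definition eval_monomial :: "('v \<Rightarrow> ('w,'k::comm_ring_1) mpoly) \<Rightarrow> ('v \<Rightarrow>\<^sub>0 nat) \<Rightarrow> ('w,'k) mpoly" where
  "eval_monomial g m = (\<Prod>v\<in>Poly_Mapping.keys m. g v ^ Poly_Mapping.lookup m v)"

lemma peval_monomial_diff:
  "peval g (Poly_Mapping.single m1 1 - Poly_Mapping.single m2 1 :: ('v,'k::comm_ring_1) mpoly)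
    = eval_monomial g m1 - eval_monomial g m2"
proof (cases "m1 = m2")
  case True
  then show ?thesis by (simp add: peval_def)
next
  case False
  let ?f = "Poly_Mapping.single m1 1 - Poly_Mapping.single m2 1 :: ('v,'k) mpoly"
  have lookup_f: "Poly_Mapping.lookup ?f m1 = 1" "Poly_Mapping.lookup ?f m2 = -1"
    using False by (simp_all add: lookup_minus lookup_single)
  have "Poly_Mapping.keys ?f = {m1, m2}"
  proof
    show "Poly_Mapping.keys ?f \<subseteq> {m1, m2}"
      using keys_diff[of "Poly_Mapping.single m1 (1::'k)" "Poly_Mapping.single m2 1"] by auto
    show "{m1, m2} \<subseteq> Poly_Mapping.keys ?f"
      using lookup_f by (auto simp: in_keys_iff)
  qed
  then show ?thesis
    unfolding peval_def using False lookup_f by (simp add: eval_monomial_def single_uminus)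
qed

lemma eval_monomial_pair:
  "eval_monomial g (Poly_Mapping.single u 1 + Poly_Mapping.single v 1) = g u * g v"
proof (cases "u = v")
  case True
  have "Poly_Mapping.single u (1::nat) + Poly_Mapping.single u 1 = Poly_Mapping.single u 2"
    by (simp only: single_add[symmetric] one_add_one)
  then show ?thesis
    using True by (simp add: eval_monomial_def power2_eq_square)
next
  case False
  then have "Poly_Mapping.keys (Poly_Mapping.single u (1::nat) + Poly_Mapping.single v 1) = {u, v}"
    by (auto simp: in_keys_iff lookup_add lookup_single when_def split: if_splits)
  then show ?thesis
    using False by (simp add: eval_monomial_def lookup_add lookup_single)
qed

lemma peval_binomial:
  "peval g (pvar \<alpha> * pvar \<beta> - pvar \<gamma> * pvar \<delta> :: ('v,'k::comm_ring_1) mpoly) = g \<alpha> * g \<beta> - g \<gamma> * g \<delta>"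
  unfolding pvar_def mult_single mult_1 peval_monomial_diff eval_monomial_pair ..

lemma prod_pvar:
  "finite A \<Longrightarrow> (\<Prod>j\<in>A. pvar (h j)) = (Poly_Mapping.single (\<Sum>j\<in>A. Poly_Mapping.single (h j) 1) 1
    :: ('v,'k::comm_ring_1) mpoly)"
  by (induction A rule: finite_induct) (simp_all add: pvar_def mult_single add.commute)

lemma eta_binomial_eq_0_imp_swap:
  assumes "eta n (pvar \<alpha> * pvar \<beta> - pvar \<gamma> * pvar \<delta> :: (nat option list, 'k::comm_ring_1) mpoly) = 0"
    and "j < n"
  shows "\<alpha>!j = \<gamma>!j \<and> \<beta>!j = \<delta>!j \<or> \<alpha>!j = \<delta>!j \<and> \<beta>!j = \<gamma>!j"
proof -
  define E where "E \<sigma> = (\<Sum>i<n. Poly_Mapping.single (i, \<sigma>!i) (1::nat))" for \<sigma> :: "nat option list"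
  have "(\<Prod>i<n. pvar (i, \<sigma>!i)) = (Poly_Mapping.single (E \<sigma>) 1 :: (nat \<times> nat option,'k) mpoly)" for \<sigma>
    unfolding E_def by (rule prod_pvar) simp
  then have "(Poly_Mapping.single (E \<alpha> + E \<beta>) 1 :: (nat \<times> nat option,'k) mpoly)
      = Poly_Mapping.single (E \<gamma> + E \<delta>) 1"
    using assms(1) by (simp add: eta_def peval_binomial mult_single)
  then have "Poly_Mapping.lookup (Poly_Mapping.single (E \<alpha> + E \<beta>) (1::'k)) (E \<gamma> + E \<delta>) = 1"
    by simp
  then have E_eq: "E \<alpha> + E \<beta> = E \<gamma> + E \<delta>"
    by (simp add: lookup_single when_def split: if_splits)
  have lookup_E: "Poly_Mapping.lookup (E \<sigma>) (j, x) = (if \<sigma>!j = x then 1 else 0)" for \<sigma> x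
  proof -
    have "Poly_Mapping.lookup (E \<sigma>) (j, x) = (\<Sum>i<n. if i = j then (if \<sigma>!j = x then 1 else 0) else 0)"
      unfolding E_def lookup_sum by (intro sum.cong) (auto simp: lookup_single when_def)
    then show ?thesis
      using assms(2) by simp
  qed
  have "(if \<alpha>!j = x then 1 else 0) + (if \<beta>!j = x then 1 else 0)
      = (if \<gamma>!j = x then 1 else 0) + (if \<delta>!j = x then 1 else (0::nat))" for x
    using arg_cong[OF E_eq, of "\<lambda>m. Poly_Mapping.lookup m (j, x)"] by (simp only: lookup_add lookup_E)
  from this[of "\<alpha>!j"] this[of "\<beta>!j"] show ?thesis
    by (cases "\<gamma>!j = \<alpha>!j"; cases "\<delta>!j = \<alpha>!j"; cases "\<gamma>!j = \<beta>!j"; cases "\<delta>!j = \<beta>!j";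
        cases "\<alpha>!j = \<beta>!j") simp_all
qed

lemma swapped_coordinates_subset:
  assumes len: "length \<alpha> = n" "length \<beta> = n" "length \<gamma> = n"
    and supp: "supp \<alpha> = J" "supp \<gamma> = J"
    and swap: "\<forall>j<n. \<alpha>!j = \<gamma>!j \<and> \<beta>!j = \<delta>!j \<or> \<alpha>!j = \<delta>!j \<and> \<beta>!j = \<gamma>!j"
  shows "{j. j < n \<and> \<alpha>!j \<noteq> \<gamma>!j} \<subseteq> J \<inter> supp \<beta>"
proof
  fix j assume "j \<in> {j. j < n \<and> \<alpha>!j \<noteq> \<gamma>!j}"
  then have j: "j < n" "\<alpha>!j \<noteq> \<gamma>!j" "\<beta>!j = \<gamma>!j"
    using swap by auto
  then have "\<alpha>!j \<noteq> None \<or> \<gamma>!j \<noteq> None"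
    by auto
  then have "j \<in> J"
    using supp len j(1) by (auto simp: supp_def)
  moreover have "\<beta>!j \<noteq> None"
    using \<open>j \<in> J\<close> supp(2) j(3) by (auto simp: supp_def)
  ultimately show "j \<in> J \<inter> supp \<beta>"
    using j(1) len by (simp add: supp_def)
qed

lemma margin_entry_times_swap_binomial_in_I_Delta:
  assumes \<alpha>: "\<alpha> \<in> Svars n a \<Delta>" "supp \<alpha> = J" and \<gamma>: "\<gamma> \<in> Svars n a \<Delta>" "supp \<gamma> = J"
    and \<beta>: "\<beta> \<in> Svars n a \<Delta>" and \<delta>: "\<delta> \<in> tuples n a"
    and swap: "\<forall>j<n. \<alpha>!j = \<gamma>!j \<and> \<beta>!j = \<delta>!j \<or> \<alpha>!j = \<delta>!j \<and> \<beta>!j = \<gamma>!j"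
    and \<sigma>: "\<sigma> \<in> tuples n a" "supp \<sigma> = J \<inter> supp \<beta>"
  shows "(xsum n a \<sigma> * (xsum n a \<alpha> * xsum n a \<beta> - xsum n a \<gamma> * xsum n a \<delta>)
    :: (nat list, 'k::comm_ring_1) mpoly) \<in> I_Delta n a \<Delta>"
proof -
  define M where "M = J \<inter> supp \<beta>"
  define S where "S = {j. j < n \<and> \<alpha>!j \<noteq> \<gamma>!j}"
  have tuples: "\<alpha> \<in> tuples n a" "\<beta> \<in> tuples n a" "\<gamma> \<in> tuples n a"
    using \<alpha> \<beta> \<gamma> by (simp_all add: Svars_def)
  have len: "length \<alpha> = n" "length \<beta> = n" "length \<gamma> = n" "length \<delta> = n" "length \<sigma> = n"
    using tuples \<delta> \<sigma> by (simp_all add: length_tuple)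
  have faces: "J \<in> \<Delta>" "supp \<beta> \<in> \<Delta>"
    using \<alpha> \<beta> by (auto simp: Svars_def)
  have S_M: "S \<subseteq> M"
    unfolding S_def M_def using len(1-3) \<alpha>(2) \<gamma>(2) swap by (rule swapped_coordinates_subset)
  have \<sigma>_M: "supp \<sigma> = M" "M \<subseteq> J" "M \<subseteq> supp \<beta>"
    using \<sigma>(2) by (auto simp: M_def)
  define A where "A = list_override M \<sigma> \<alpha>"
  define B where "B = list_override M \<alpha> \<sigma>"
  define C where "C = list_override M \<sigma> \<gamma>"
  have A: "A \<in> tuples n a" "supp A = M"
    using tuples \<sigma> len \<alpha>(2) \<sigma>_M by (auto simp: A_def list_override_in_tuples supp_list_override)
  have overrides: "list_override S A \<beta> = C" "list_override S \<beta> A = \<delta>" "list_override M \<gamma> \<sigma> = B"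
    using len S_M swap by (auto simp: A_def B_def C_def S_def list_eq_iff_nth_eq)
  have E1: "(xsum n a \<sigma> * xsum n a \<alpha> - xsum n a A * xsum n a B :: (nat list, 'k) mpoly) \<in> I_Delta n a \<Delta>"
    unfolding A_def B_def
    by (rule coarser_margin_swap_in_I_Delta[OF faces(1) \<sigma>(1) _ tuples(1) \<alpha>(2)]) (simp_all add: \<sigma>_M)
  have E2: "(xsum n a A * xsum n a \<beta> - xsum n a C * xsum n a \<delta> :: (nat list, 'k) mpoly) \<in> I_Delta n a \<Delta>"
    unfolding overrides(1,2)[symmetric]
    by (rule coarser_margin_swap_in_I_Delta[OF faces(2) A(1) _ tuples(2) refl]) (simp_all add: A(2) S_M \<sigma>_M)
  have E3: "(xsum n a \<sigma> * xsum n a \<gamma> - xsum n a C * xsum n a B :: (nat list, 'k) mpoly) \<in> I_Delta n a \<Delta>"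
    unfolding C_def overrides(3)[symmetric]
    by (rule coarser_margin_swap_in_I_Delta[OF faces(1) \<sigma>(1) _ tuples(3) \<gamma>(2)]) (simp_all add: \<sigma>_M)
  have "xsum n a \<beta> * (xsum n a \<sigma> * xsum n a \<alpha> - xsum n a A * xsum n a B)
      + xsum n a B * (xsum n a A * xsum n a \<beta> - xsum n a C * xsum n a \<delta>)
      - xsum n a \<delta> * (xsum n a \<sigma> * xsum n a \<gamma> - xsum n a C * xsum n a B)
      \<in> (I_Delta n a \<Delta> :: (nat list, 'k) mpoly set)"
    by (intro E1 E2 E3 xsum_in_Rring I_Delta_mult I_Delta_add I_Delta_diff)
  then show ?thesis
    by (simp add: algebra_simps)
qed

theorem lemma4p2:
  fixes n :: nat and a :: "nat \<Rightarrow> nat" and \<Delta> :: "nat set set"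
    and \<alpha> \<beta> \<gamma> \<delta> :: "nat option list" and J K :: "nat set"
  assumes "\<forall>j<n. 0 < a j"
    and "simplicial_complex n \<Delta>"
    and "\<alpha> \<in> Svars n a \<Delta>" "\<beta> \<in> Svars n a \<Delta>" "\<gamma> \<in> Svars n a \<Delta>" "\<delta> \<in> Svars n a \<Delta>"
    and "(pvar \<alpha> * pvar \<beta> - pvar \<gamma> * pvar \<delta> :: (nat option list, 'k::field) mpoly) \<in> Q_Delta n a \<Delta>"
    and "supp \<alpha> = J" and "supp \<gamma> = J" and "K = supp \<beta>"
  shows "{g * tau n a (pvar \<alpha> * pvar \<beta> - pvar \<gamma> * pvar \<delta> :: (nat option list, 'k) mpoly) | g.
            g \<in> Lideal n a (J \<inter> K)} \<subseteq> I_Delta n a \<Delta>"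
proof clarify
  fix g :: "(nat list, 'k) mpoly"
  assume g: "g \<in> Lideal n a (J \<inter> K)"
  have "eta n (pvar \<alpha> * pvar \<beta> - pvar \<gamma> * pvar \<delta> :: (nat option list, 'k) mpoly) = 0"
    using assms(7) by (simp add: Q_Delta_def)
  then have "\<forall>j<n. \<alpha>!j = \<gamma>!j \<and> \<beta>!j = \<delta>!j \<or> \<alpha>!j = \<delta>!j \<and> \<beta>!j = \<gamma>!j"
    using eta_binomial_eq_0_imp_swap by blast
  then have "s * (xsum n a \<alpha> * xsum n a \<beta> - xsum n a \<gamma> * xsum n a \<delta>) \<in> I_Delta n a \<Delta>"
    if "s \<in> {xsum n a \<sigma> | \<sigma>. \<sigma> \<in> tuples n a \<and> supp \<sigma> = J \<inter> K}" for s
    using that margin_entry_times_swap_binomial_in_I_Delta[OF assms(3,8,5,9,4)] assms(6,10)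
    by (auto simp: Svars_def)
  then show "g * tau n a (pvar \<alpha> * pvar \<beta> - pvar \<gamma> * pvar \<delta>) \<in> I_Delta n a \<Delta>"
    using g unfolding tau_def peval_binomial I_Delta_def Lideal_def
    by (rule gen_ideal_mult_right_from_generators)
qed

end
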